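(* Let $A=\begin{pmatrix} a & b\\ c & d\end{pmatrix}$ be a positive $2\times 2$ matrix. Define the positive diagonal matrices \[ X=\begin{pmatrix} \sqrt{cd} & 0\\ 0 & \sqrt{ab}\end{pmatrix},\qquad Y=\begin{pmatrix} \left(a\sqrt{cd}+c\sqrt{ab}\right)^{-1} & 0\\ 0 & \left(b\sqrt{cd}+d\sqrt{ab}\right)^{-1}\end{pmatrix}. \] Then the alternate minimization sequence $(A^{(\ell)})_{\ell\ge 0}$ of $A$ converges to the doubly stochastic matrix \[ S(A)=XAY=\begin{pmatrix} \alpha & \beta\\ \beta & \alpha\end{pmatrix},\qquad \alpha=\frac{\sqrt{ad}}{\sqrt{ad}+\sqrt{bc}},\quad \beta=\frac{\sqrt{bc}}{\sqrt{ad}+\sqrt{bc}}. \]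
   Context: A positive matrix has all entries positive. For an $n\times n$ matrix $A=(a_{i,j})$ let $\mathrm{row}_i(A)=\sum_j a_{i,j}$ and $\mathrm{col}_j(A)=\sum_i a_{i,j}$. A matrix is doubly stochastic if all its row sums and all its column sums equal $1$. For positive $A$ let $X(A)=\mathrm{diag}(1/\mathrm{row}_1(A),\ldots,1/\mathrm{row}_n(A))$ and $Y(A)=\mathrm{diag}(1/\mathrm{col}_1(A),\ldots,1/\mathrm{col}_n(A))$. The alternate minimization sequence of $A$ is defined by $A^{(0)}=A$, $A^{(2k+1)}=A^{(2k)}\,Y(A^{(2k)})$ (column scaling) and $A^{(2k+2)}=X(A^{(2k+1)})\,A^{(2k+1)}$ (row scaling) for $k\ge 0$. *)

theory Defs
  imports "HOL-Analysis.Analysis"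
begin

definition positive_matrix :: "real^'n^'n \<Rightarrow> bool" where
  "positive_matrix A \<longleftrightarrow> (\<forall>i j. A $ i $ j > 0)"

definition row_sum :: "real^'n^'n \<Rightarrow> 'n \<Rightarrow> real" where
  "row_sum A i = (\<Sum>j\<in>UNIV. A $ i $ j)"

definition col_sum :: "real^'n^'n \<Rightarrow> 'n \<Rightarrow> real" where
  "col_sum A j = (\<Sum>i\<in>UNIV. A $ i $ j)"

definition doubly_stochastic :: "real^'n^'n \<Rightarrow> bool" where
  "doubly_stochastic A \<longleftrightarrow> (\<forall>i. row_sum A i = 1) \<and> (\<forall>j. col_sum A j = 1)"

definition diag_mat :: "(real^'n) \<Rightarrow> real^'n^'n" where
  "diag_mat v = (\<chi> i j. if i = j then v $ i else 0)"

definition Xscal :: "real^'n^'n \<Rightarrow> real^'n^'n" where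
  "Xscal A = diag_mat (\<chi> i. 1 / row_sum A i)"

definition Yscal :: "real^'n^'n \<Rightarrow> real^'n^'n" where
  "Yscal A = diag_mat (\<chi> j. 1 / col_sum A j)"

fun alt_min :: "real^'n^'n \<Rightarrow> nat \<Rightarrow> real^'n^'n" where
  "alt_min A 0 = A"
| "alt_min A (Suc l) =
     (if even l then alt_min A l ** Yscal (alt_min A l)
      else Xscal (alt_min A l) ** alt_min A l)"

end

theory Submission
  imports Defs
begin

(* Diagonal scaling preserves the cross ratio a d / (b c) =: t^2. Hence after the first column
   scaling every iterate is, up to transposition, the column-stochastic matrix col_stoch_mat t x
   for a single parameter x > 0, and each scaling step moves x by the Moebius map
   x |-> (x + t) / (t x + 1). The Cayley transform (x - 1) / (x + 1) turns this map into
   multiplication by (1 - t) / (1 + t), so x tends to 1 geometrically and the iterates tend to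
   the symmetric doubly stochastic matrix col_stoch_mat t 1. *)

definition mat2 :: "real \<Rightarrow> real \<Rightarrow> real \<Rightarrow> real \<Rightarrow> real^2^2" where
  "mat2 p q r s = (\<chi> i j. if i = 1 then (if j = 1 then p else q) else (if j = 1 then r else s))"

lemma mat2_nth [simp]:
  "mat2 p q r s $ 1 $ 1 = p" "mat2 p q r s $ 1 $ 2 = q"
  "mat2 p q r s $ 2 $ 1 = r" "mat2 p q r s $ 2 $ 2 = s"
  by (simp_all add: mat2_def)

lemma mat2_eq_iff:
  "(M::real^2^2) = N \<longleftrightarrow> M$1$1 = N$1$1 \<and> M$1$2 = N$1$2 \<and> M$2$1 = N$2$1 \<and> M$2$2 = N$2$2"
  by (auto simp: vec_eq_iff forall_2)

lemma mat2_mult_mat2: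
  "mat2 p q r s ** mat2 p' q' r' s' =
     mat2 (p * p' + q * r') (p * q' + q * s') (r * p' + s * r') (r * q' + s * s')"
  by (simp add: mat2_eq_iff matrix_matrix_mult_def sum_2)

lemma transpose_mat2: "transpose (mat2 p q r s) = mat2 p r q s"
  by (simp add: mat2_eq_iff transpose_def)

lemma diag_mat_2: "diag_mat (v::real^2) = mat2 (v$1) 0 0 (v$2)"
  by (simp add: mat2_eq_iff diag_mat_def)

lemma Xscal_mat2: "Xscal (mat2 p q r s) = mat2 (1 / (p + q)) 0 0 (1 / (r + s))"
  by (simp add: Xscal_def diag_mat_2 row_sum_def sum_2)

lemma Yscal_mat2: "Yscal (mat2 p q r s) = mat2 (1 / (p + r)) 0 0 (1 / (q + s))"
  by (simp add: Yscal_def diag_mat_2 col_sum_def sum_2)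

lemma doubly_stochastic_mat2:
  "doubly_stochastic (mat2 p q r s) \<longleftrightarrow> p + q = 1 \<and> r + s = 1 \<and> p + r = 1 \<and> q + s = 1"
  by (simp add: doubly_stochastic_def row_sum_def col_sum_def forall_2 sum_2)

lemma tendsto_mat2:
  "(p \<longlongrightarrow> p0) F \<Longrightarrow> (q \<longlongrightarrow> q0) F \<Longrightarrow> (r \<longlongrightarrow> r0) F \<Longrightarrow> (s \<longlongrightarrow> s0) F \<Longrightarrow>
   ((\<lambda>n. mat2 (p n) (q n) (r n) (s n)) \<longlongrightarrow> mat2 p0 q0 r0 s0) F"
  unfolding mat2_def by (intro tendsto_vec_lambda) auto

lemma transpose_diag_mat: "transpose (diag_mat v) = diag_mat v"
  by (simp add: transpose_def diag_mat_def vec_eq_iff)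

lemma Yscal_transpose: "Yscal (transpose M) = Xscal M"
  by (simp add: Yscal_def Xscal_def col_sum_def row_sum_def transpose_def)

lemma transpose_mult_Yscal:
  "transpose (M ** Yscal M) = Xscal (transpose M) ** transpose M"
  by (metis Yscal_transpose transpose_diag_mat Xscal_def matrix_transpose_mul transpose_transpose)

lemma tendsto_if_even:
  assumes "f \<longlonglongrightarrow> L" and "g \<longlonglongrightarrow> L"
  shows "(\<lambda>n. if even n then f n else g n) \<longlonglongrightarrow> L"
  unfolding tendsto_def
proof (intro allI impI)
  fix S :: "'a set" assume "open S" "L \<in> S"
  then have "eventually (\<lambda>n. f n \<in> S) sequentially" "eventually (\<lambda>n. g n \<in> S) sequentially"
    using assms by (simp_all add: tendsto_def)
  then show "eventually (\<lambda>n. (if even n then f n else g n) \<in> S) sequentially"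
    by (rule eventually_elim2) simp
qed

definition mobius_step :: "real \<Rightarrow> real \<Rightarrow> real" where
  "mobius_step t x = (x + t) / (t * x + 1)"

lemma mobius_step_pos: "t > 0 \<Longrightarrow> x > 0 \<Longrightarrow> mobius_step t x > 0"
  by (simp add: mobius_step_def add_pos_pos)

lemma mobius_iter_pos: "t > 0 \<Longrightarrow> x > 0 \<Longrightarrow> (mobius_step t ^^ n) x > 0"
  by (induction n) (simp_all add: mobius_step_pos)

lemma mobius_step_cayley:
  assumes "t > 0" "x > 0"
  shows "(mobius_step t x - 1) / (mobius_step t x + 1) = (1 - t) / (1 + t) * ((x - 1) / (x + 1))"
proof -
  have denom_pos: "t * x + 1 > 0" using assms by (simp add: add_pos_pos)
  then have "mobius_step t x - 1 = (1 - t) * (x - 1) / (t * x + 1)"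
    and "mobius_step t x + 1 = (1 + t) * (x + 1) / (t * x + 1)"
    by (simp_all add: mobius_step_def field_simps)
  then show ?thesis
    using assms denom_pos by simp
qed

lemma mobius_iter_tendsto_1:
  assumes "t > 0" "x0 > 0"
  shows "(\<lambda>n. (mobius_step t ^^ n) x0) \<longlonglongrightarrow> 1"
proof -
  define x where "x n = (mobius_step t ^^ n) x0" for n
  define w where "w n = (x n - 1) / (x n + 1)" for n
  have x_pos: "x n > 0" for n
    using assms by (simp add: x_def mobius_iter_pos)
  have w_eq: "w n = ((1 - t) / (1 + t)) ^ n * ((x0 - 1) / (x0 + 1))" for n
    by (induction n) (simp_all add: w_def x_def mobius_step_cayley assms mobius_iter_pos)
  have "\<bar>(1 - t) / (1 + t)\<bar> < 1"
    using assms by (simp add: abs_less_iff field_simps)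
  then have "w \<longlonglongrightarrow> 0 * ((x0 - 1) / (x0 + 1))"
    unfolding w_eq by (intro tendsto_intros LIMSEQ_abs_realpow_zero2)
  then have "(\<lambda>n. (1 + w n) / (1 - w n)) \<longlonglongrightarrow> (1 + 0) / (1 - 0)"
    by (intro tendsto_intros) simp_all
  moreover have "(1 + w n) / (1 - w n) = x n" for n
    using x_pos[of n] by (simp add: w_def field_simps)
  ultimately show ?thesis by (simp add: x_def)
qed

(* The general positive column-stochastic 2x2 matrix with cross ratio t^2. *)
definition col_stoch_mat :: "real \<Rightarrow> real \<Rightarrow> real^2^2" where
  "col_stoch_mat t x = mat2 (t * x / (t * x + 1)) (x / (x + t)) (1 / (t * x + 1)) (t / (x + t))"

lemma Xscal_col_stoch_mat:
  assumes "t > 0" "x > 0"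
  shows "Xscal (col_stoch_mat t x) ** col_stoch_mat t x
           = transpose (col_stoch_mat t (mobius_step t x))"
proof -
  define u v where "u = t * (x + t) + (t * x + 1)" and "v = x + t + t * (t * x + 1)"
  have pos: "t * x + 1 > 0" "x + t > 0" "u > 0" "v > 0"
    using assms by (simp_all add: u_def v_def add_pos_pos)
  have row_sums: "t * x / (t * x + 1) + x / (x + t) = x * u / ((t * x + 1) * (x + t))"
      "1 / (t * x + 1) + t / (x + t) = v / ((t * x + 1) * (x + t))"
    using pos by (simp_all add: u_def v_def field_simps)
  have "Xscal (col_stoch_mat t x) ** col_stoch_mat t x
          = mat2 (t * (x + t) / u) ((t * x + 1) / u) ((x + t) / v) (t * (t * x + 1) / v)"
    using assms pos
    unfolding col_stoch_mat_def Xscal_mat2 mat2_mult_mat2 row_sums by (simp add: mat2_eq_iff)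
  also have "\<dots> = transpose (col_stoch_mat t (mobius_step t x))"
  proof -
    have "t * mobius_step t x + 1 = u / (t * x + 1)" "mobius_step t x + t = v / (t * x + 1)"
      using pos by (simp_all add: u_def v_def mobius_step_def field_simps)
    then show ?thesis
      using pos unfolding col_stoch_mat_def transpose_mat2
      by (simp add: mat2_eq_iff mobius_step_def)
  qed
  finally show ?thesis .
qed

lemma col_stoch_mat_Yscal:
  assumes "t > 0" "x > 0"
  shows "transpose (col_stoch_mat t x) ** Yscal (transpose (col_stoch_mat t x))
           = col_stoch_mat t (mobius_step t x)"
  by (metis transpose_mult_Yscal Xscal_col_stoch_mat[OF assms] transpose_transpose)

lemma col_stoch_mat_1: "col_stoch_mat t 1 = mat2 (t / (t + 1)) (1 / (t + 1)) (1 / (t + 1)) (t / (t + 1))"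
  by (simp add: col_stoch_mat_def add.commute)

lemma tendsto_col_stoch_mat:
  assumes "(x \<longlongrightarrow> 1) F" "t > 0"
  shows "((\<lambda>n. col_stoch_mat t (x n)) \<longlongrightarrow> col_stoch_mat t 1) F"
    and "((\<lambda>n. transpose (col_stoch_mat t (x n))) \<longlongrightarrow> col_stoch_mat t 1) F"
  using assms unfolding col_stoch_mat_def transpose_mat2
  by (auto intro!: tendsto_mat2 tendsto_eq_intros simp: add.commute)

lemma alt_min_Suc_if_col_stoch:
  assumes "alt_min A 1 = col_stoch_mat t x0" "t > 0" "x0 > 0"
  shows "alt_min A (Suc n) =
           (if even n then col_stoch_mat t ((mobius_step t ^^ n) x0)
            else transpose (col_stoch_mat t ((mobius_step t ^^ n) x0)))"
proof (induction n)
  case 0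
  then show ?case using assms(1) by simp
next
  case (Suc n)
  have "(mobius_step t ^^ n) x0 > 0"
    using assms by (simp add: mobius_iter_pos)
  then show ?case
    unfolding alt_min.simps(2)[of A "Suc n"] Suc.IH
    using assms(2) by (simp add: Xscal_col_stoch_mat col_stoch_mat_Yscal)
qed

lemma alt_min_tendsto_if_col_stoch:
  assumes "alt_min A 1 = col_stoch_mat t x0" "t > 0" "x0 > 0"
  shows "alt_min A \<longlonglongrightarrow> col_stoch_mat t 1"
proof -
  have "(\<lambda>n. (mobius_step t ^^ n) x0) \<longlonglongrightarrow> 1"
    using assms(2,3) by (rule mobius_iter_tendsto_1)
  then have "(\<lambda>n. alt_min A (Suc n)) \<longlonglongrightarrow> col_stoch_mat t 1"
    unfolding alt_min_Suc_if_col_stoch[OF assms]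
    using assms(2) by (intro tendsto_if_even tendsto_col_stoch_mat)
  then show ?thesis
    by (rule LIMSEQ_imp_Suc)
qed

lemma col_stoch_mat_eq_mat2:
  assumes "t > 0" "x > 0" "p > 0" "q > 0" "r > 0" "s > 0" "t * x = p / r" "x / t = q / s"
  shows "col_stoch_mat t x = mat2 (p / (p + r)) (q / (q + s)) (r / (p + r)) (s / (q + s))"
proof -
  have "col_stoch_mat t x
          = mat2 (t * x / (t * x + 1)) (x / t / (x / t + 1)) (1 / (t * x + 1)) (1 / (x / t + 1))"
    using assms(1,2) unfolding col_stoch_mat_def by (simp add: mat2_eq_iff field_simps)
  also have "\<dots> = mat2 (p / (p + r)) (q / (q + s)) (r / (p + r)) (s / (q + s))"
    using assms(3-6) unfolding assms(7,8) by (simp add: mat2_eq_iff field_simps)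
  finally show ?thesis .
qed

lemma alt_min_mat2_tendsto:
  assumes "a > 0" "b > 0" "c > 0" "d > 0"
  shows "alt_min (mat2 a b c d) \<longlonglongrightarrow> col_stoch_mat (sqrt (a * d / (b * c))) 1"
proof (rule alt_min_tendsto_if_col_stoch)
  let ?t = "sqrt (a * d / (b * c))" and ?x0 = "sqrt (a * b / (c * d))"
  show "?t > 0" "?x0 > 0"
    using assms by simp_all
  have "a * d / (b * c) * (a * b / (c * d)) = (a / c)\<^sup>2"
    and "a * b / (c * d) / (a * d / (b * c)) = (b / d)\<^sup>2"
    using assms by (simp_all add: field_simps power2_eq_square)
  then have "?t * ?x0 = a / c" "?x0 / ?t = b / d"
    using assms by (simp_all only: real_sqrt_mult[symmetric] real_sqrt_divide[symmetric])
      simp_all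
  then show "alt_min (mat2 a b c d) 1 = col_stoch_mat ?t ?x0"
    using assms by (simp add: col_stoch_mat_eq_mat2 Yscal_mat2 mat2_mult_mat2)
qed

lemma balancing_scaling_mat2:
  fixes a b c d :: real
  assumes "a > 0" "b > 0" "c > 0" "d > 0"
  defines "\<alpha> \<equiv> sqrt (a * d) / (sqrt (a * d) + sqrt (b * c))"
    and "\<beta> \<equiv> sqrt (b * c) / (sqrt (a * d) + sqrt (b * c))"
  shows "mat2 (sqrt (c * d)) 0 0 (sqrt (a * b)) ** mat2 a b c d **
         mat2 (1 / (a * sqrt (c * d) + c * sqrt (a * b))) 0 0 (1 / (b * sqrt (c * d) + d * sqrt (a * b)))
         = mat2 \<alpha> \<beta> \<beta> \<alpha>"
proof -
  define p q r s where "p = sqrt a" and "q = sqrt b" and "r = sqrt c" and "s = sqrt d"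
  have pos: "p > 0" "q > 0" "r > 0" "s > 0"
    and sq: "a = p * p" "b = q * q" "c = r * r" "d = s * s"
    using assms(1-4) by (simp_all add: p_def q_def r_def s_def)
  define e where "e = p * s + q * r"
  have "e > 0"
    using pos by (simp add: e_def add_pos_pos)
  have roots: "sqrt (a * d) = p * s" "sqrt (b * c) = q * r" "sqrt (c * d) = r * s" "sqrt (a * b) = p * q"
    using pos unfolding sq by (simp_all add: real_sqrt_mult)
  have "a * (r * s) + c * (p * q) = p * r * e" "b * (r * s) + d * (p * q) = q * s * e"
    unfolding sq e_def by (simp_all add: algebra_simps)
  then have "mat2 (sqrt (c * d)) 0 0 (sqrt (a * b)) ** mat2 a b c d **
         mat2 (1 / (a * sqrt (c * d) + c * sqrt (a * b))) 0 0 (1 / (b * sqrt (c * d) + d * sqrt (a * b)))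
         = mat2 (r * s * a / (p * r * e)) (r * s * b / (q * s * e))
                (p * q * c / (p * r * e)) (p * q * d / (q * s * e))"
    unfolding roots by (simp add: mat2_mult_mat2)
  also have "\<dots> = mat2 \<alpha> \<beta> \<beta> \<alpha>"
    using pos \<open>e > 0\<close> unfolding \<alpha>_def \<beta>_def roots e_def[symmetric] unfolding sq
    by (simp add: mat2_eq_iff field_simps)
  finally show ?thesis .
qed

theorem theorem4:
  fixes A :: "real^2^2" and a b c d :: real
  assumes "A = (\<chi> i j. if i = 1 then (if j = 1 then a else b) else (if j = 1 then c else d))"
    and "positive_matrix A"
  defines "X \<equiv> diag_mat (\<chi> i. if i = 1 then sqrt (c * d) else sqrt (a * b)) :: real^2^2"
    and "Y \<equiv> diag_mat (\<chi> j. if j = 1 then 1 / (a * sqrt (c * d) + c * sqrt (a * b))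
                             else 1 / (b * sqrt (c * d) + d * sqrt (a * b))) :: real^2^2"
    and "\<alpha> \<equiv> sqrt (a * d) / (sqrt (a * d) + sqrt (b * c))"
    and "\<beta> \<equiv> sqrt (b * c) / (sqrt (a * d) + sqrt (b * c))"
  shows "alt_min A \<longlonglongrightarrow> X ** A ** Y
         \<and> X ** A ** Y = (\<chi> i j. if i = j then \<alpha> else \<beta>)
         \<and> doubly_stochastic (X ** A ** Y)"
proof -
  have A: "A = mat2 a b c d"
    using assms(1) by (simp add: mat2_def)
  then have pos: "a > 0" "b > 0" "c > 0" "d > 0"
    using assms(2) by (simp_all add: positive_matrix_def forall_2)
  define t where "t = sqrt (a * d / (b * c))"
  have "t > 0" and \<alpha>_eq: "\<alpha> = t / (t + 1)" and \<beta>_eq: "\<beta> = 1 / (t + 1)"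
    using pos unfolding t_def \<alpha>_def \<beta>_def by (simp_all add: real_sqrt_divide field_simps)
  then have "mat2 \<alpha> \<beta> \<beta> \<alpha> = col_stoch_mat t 1"
    and "doubly_stochastic (mat2 \<alpha> \<beta> \<beta> \<alpha>)"
    unfolding \<alpha>_eq \<beta>_eq by (simp_all add: col_stoch_mat_1 doubly_stochastic_mat2 field_simps)
  moreover have "X ** A ** Y = mat2 \<alpha> \<beta> \<beta> \<alpha>"
    using balancing_scaling_mat2[OF pos] unfolding X_def Y_def A diag_mat_2 \<alpha>_def \<beta>_def by simp
  moreover have "(\<chi> i j. if i = j then \<alpha> else \<beta>) = mat2 \<alpha> \<beta> \<beta> \<alpha>"
    by (simp add: mat2_eq_iff)
  ultimately show ?thesis
    using alt_min_mat2_tendsto[OF pos] unfolding A t_def by simp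
qed

end
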